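(* Let $\lambda\ge0$, $\delta>0$, and let $\rho_c$ ($c>0$) be as in the context. Let $0<a<b$. Then for all $s<u<t$ and $x<z<y$, $$\rho_b(s,x,u,z)\rho_a(u,z,t,y)\le D\Big[\rho_{b-a}(s,x,u,z)\vee\rho_a(u,z,t,y)\Big]\rho_a(s,x,t,y),$$ with $D=\left(\frac{b}{b-a}\right)^{3/2}\exp\left[\frac32\, l\!\left(\frac{a}{b-a}\right)\right]$, where $$l(\alpha)=\max_{\tau\ge\alpha\vee1/\alpha}\left[\ln(1+\tau)-\frac{\tau-\alpha}{1+\tau}\ln(\alpha\tau)\right].$$
   Context: For $t>0$, $z\in\mathbb{R}$ let $p(t,z)=(4\pi)^{-1/2}\delta t z^{-3/2}\exp\{-(\delta t-2\sqrt{\lambda}z)^2/(4z)\}\mathbf 1_{z>0}$. For $c>0$ put $\rho_c(s,x,t,y)=c\,p(c(t-s),c(y-x))$ if $s<t$, and $0$ otherwise. *)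

theory Defs
  imports Complex_Main
begin

definition pdens :: "real \<Rightarrow> real \<Rightarrow> real \<Rightarrow> real \<Rightarrow> real" where
  "pdens delta lam t z =
     (if z > 0 then (4 * pi) powr (-1/2) * delta * t * z powr (-3/2)
        * exp (- ((delta * t - 2 * sqrt lam * z)^2) / (4 * z))
      else 0)"

definition rho :: "real \<Rightarrow> real \<Rightarrow> real \<Rightarrow> real \<Rightarrow> real \<Rightarrow> real \<Rightarrow> real \<Rightarrow> real" where
  "rho delta lam c s x t y =
     (if s < t then c * pdens delta lam (c * (t - s)) (c * (y - x)) else 0)"

definition lfun :: "real \<Rightarrow> real" where
  "lfun alpha = (SUP tau \<in> {max alpha (1/alpha)..}.
      ln (1 + tau) - (tau - alpha) / (1 + tau) * ln (alpha * tau))"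

definition Dconst :: "real \<Rightarrow> real \<Rightarrow> real" where
  "Dconst a b = (b / (b - a)) powr (3/2) * exp (3/2 * lfun (a / (b - a)))"

end

theory Submission
  imports Defs "HOL-Analysis.Harmonic_Numbers"
begin

text \<open>
  Write \<open>\<rho>\<^sub>c = exp (log_rho \<dots> c T Y)\<close> with time span \<open>T\<close> and space span \<open>Y\<close>;
  the log-density is \<open>K + ln c / 2 + ln T - 3/2 ln Y - c (\<delta>T - mY)\<^sup>2 / (4Y)\<close>.
  Put \<open>k = b/(b-a)\<close>, \<open>h = b/a\<close> (so \<open>1/k + 1/h = 1\<close>) and \<open>M = max k h\<close>. For
  \<open>\<alpha> = a/(b-a)\<close> one has \<open>1 + max \<alpha> (1/\<alpha>) = M\<close>, and the function maximised in \<open>l(\<alpha>)\<close>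
  equals \<open>ln M\<close> at the left end of its range, so \<open>ln M \<le> l(\<alpha>)\<close>; it therefore suffices to gain
  the factor \<open>k\<^bsup>3/2\<^esup> M\<^bsup>3/2\<^esup>\<close>.

  For every \<open>\<theta>\<close>, the log of the left-hand side minus \<open>\<theta> ln \<rho>\<^sub>b\<^sub>-\<^sub>a(s,x,u,z) +
  (1-\<theta>) ln \<rho>\<^sub>a(u,z,t,y) + ln \<rho>\<^sub>a(s,x,t,y)\<close> splits into a constant, a time, a space and a
  Gaussian part. If the second space increment is large (\<open>Y \<le> M Y\<^sub>2\<close>) take \<open>\<theta> = 1\<close>: the
  Gaussian part is nonpositive because \<open>p\<^sup>2/Y\<close> is subadditive. Otherwise take
  \<open>\<theta> = k Y\<^sub>2 / Y < 1\<close>: the weighted inequality \<open>(p + q)\<^sup>2 \<le> h p\<^sup>2 + k q\<^sup>2\<close> kills the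
  Gaussian part, the space part is at most \<open>ln k - \<theta> ln \<theta> \<le> ln k + 2/3 ln M\<close> because
  \<open>M \<ge> 2\<close>, and the \<open>\<theta>\<close>-mixture of the two log-densities is below their maximum.
\<close>

lemma square_add_le_weighted:
  fixes p q h k :: real
  assumes "h > 0" "k > 0" "1/h + 1/k = 1"
  shows "(p + q)^2 \<le> h * p^2 + k * q^2"
proof -
  have "1/h < 1" using assms by (smt (verit) divide_pos_pos)
  then have "h > 1" using assms by (simp add: field_simps)
  have "k * (h - 1) = h" using assms by (simp add: field_simps)
  have "(h - 1) * (h * p^2 + k * q^2 - (p + q)^2) - ((h - 1) * p - q)^2
      = (k * (h - 1) - h) * q^2"
    by (simp add: power2_eq_square algebra_simps)
  with \<open>k * (h - 1) = h\<close> have "(h - 1) * (h * p^2 + k * q^2 - (p + q)^2) = ((h - 1) * p - q)^2"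
    by simp
  with \<open>h > 1\<close> show ?thesis
    by (metis diff_ge_0_iff_ge zero_le_power2 zero_le_mult_iff diff_gt_0_iff_gt not_le)
qed

lemma max_conjugate_ge_two:
  fixes h k :: real
  assumes "h > 0" "k > 0" "1/h + 1/k = 1"
  shows "2 \<le> max h k"
proof (rule ccontr)
  assume "\<not> 2 \<le> max h k"
  then have "1/h > 1/2" "1/k > 1/2" using assms by (auto simp: field_simps)
  with assms show False by simp
qed

lemma neg_mult_ln_le_two_thirds_ln_2:
  fixes x :: real
  assumes "x > 0"
  shows "- (x * ln x) \<le> 2/3 * ln 2"
proof -
  txt \<open>\<open>-x ln x \<le> 1/e \<le> 4/9 \<le> 2/3 ln 2\<close>.\<close>
  have "- ln x \<le> exp (-1 - ln x)"
    using exp_ge_add_one_self[of "-1 - ln x"] by simp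
  also have "\<dots> = exp (-1) / x"
    using assms by (simp add: exp_diff)
  finally have "- (x * ln x) \<le> exp (-1)"
    using assms by (simp add: field_simps)
  also have "exp (-1) \<le> (4/9 :: real)"
  proof -
    have "(3/2 :: real)^2 \<le> exp (1/2) ^ 2"
      using exp_ge_add_one_self[of "1/2 :: real"] by (intro power_mono) auto
    also have "exp (1/2 :: real) ^ 2 = exp 1"
      by (simp flip: exp_of_nat_mult)
    finally show ?thesis by (simp add: exp_minus field_simps)
  qed
  also have "\<dots> \<le> 2/3 * ln 2"
    using ln2_ge_two_thirds by simp
  finally show ?thesis .
qed

lemma lfun_ge_ln:
  assumes "\<alpha> > 0"
  shows "ln (1 + max \<alpha> (1/\<alpha>)) \<le> lfun \<alpha>"
proof -
  define \<tau>\<^sub>0 where "\<tau>\<^sub>0 = max \<alpha> (1/\<alpha>)"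
  define f where "f \<tau> = ln (1 + \<tau>) - (\<tau> - \<alpha>) / (1 + \<tau>) * ln (\<alpha> * \<tau>)" for \<tau>
  have "f \<tau>\<^sub>0 = ln (1 + \<tau>\<^sub>0)"
    using assms by (auto simp: f_def \<tau>\<^sub>0_def max_def)
  have "f \<tau> \<le> 2/\<alpha> + (1 + \<alpha>) * \<alpha>" if "\<tau> \<ge> \<tau>\<^sub>0" for \<tau>
  proof -
    have "\<tau>\<^sub>0 \<ge> 1"
      using assms by (cases "\<alpha> \<ge> 1") (auto simp: \<tau>\<^sub>0_def le_max_iff_disj field_simps)
    with that have "\<tau> \<ge> 1" by simp
    have "\<alpha> * \<tau> \<ge> 1"
      using that assms by (auto simp: \<tau>\<^sub>0_def field_simps)
    have "f \<tau> = ln ((1 + \<tau>) / (\<alpha> * \<tau>)) + (1 + \<alpha>) / (1 + \<tau>) * ln (\<alpha> * \<tau>)"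
      using assms \<open>\<tau> \<ge> 1\<close> by (simp add: f_def ln_div field_simps)
    moreover have "ln ((1 + \<tau>) / (\<alpha> * \<tau>)) \<le> (1 + \<tau>) / (\<alpha> * \<tau>) - 1"
      using assms \<open>\<tau> \<ge> 1\<close> by (intro ln_le_minus_one) simp
    moreover have "(1 + \<tau>) / (\<alpha> * \<tau>) - 1 \<le> 2/\<alpha>"
      using assms \<open>\<tau> \<ge> 1\<close> by (simp add: field_simps add_increasing2)
    moreover have "(1 + \<alpha>) / (1 + \<tau>) * ln (\<alpha> * \<tau>) \<le> (1 + \<alpha>) / (1 + \<tau>) * (\<alpha> * \<tau>)"
      using ln_le_minus_one[of "\<alpha> * \<tau>"] assms \<open>\<tau> \<ge> 1\<close> by (intro mult_left_mono) auto
    moreover have "(1 + \<alpha>) / (1 + \<tau>) * (\<alpha> * \<tau>) \<le> (1 + \<alpha>) * \<alpha>"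
      using assms \<open>\<tau> \<ge> 1\<close> by (simp add: field_simps)
    ultimately show ?thesis by linarith
  qed
  then have "bdd_above (f ` {\<tau>\<^sub>0..})"
    by (intro bdd_aboveI2) auto
  then have "f \<tau>\<^sub>0 \<le> (SUP \<tau> \<in> {\<tau>\<^sub>0..}. f \<tau>)"
    by (intro cSUP_upper) auto
  also have "\<dots> = lfun \<alpha>"
    by (simp add: lfun_def f_def \<tau>\<^sub>0_def)
  finally have "f \<tau>\<^sub>0 \<le> lfun \<alpha>" .
  with \<open>f \<tau>\<^sub>0 = ln (1 + \<tau>\<^sub>0)\<close> show ?thesis
    by (simp add: \<tau>\<^sub>0_def)
qed

definition quad_exponent :: "real \<Rightarrow> real \<Rightarrow> real \<Rightarrow> real \<Rightarrow> real" where
  "quad_exponent d m T Y = (d * T - m * Y)^2 / (4 * Y)"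

definition log_rho :: "real \<Rightarrow> real \<Rightarrow> real \<Rightarrow> real \<Rightarrow> real \<Rightarrow> real \<Rightarrow> real" where
  "log_rho K d m c T Y = K + ln c / 2 + ln T - 3/2 * ln Y - c * quad_exponent d m T Y"

lemma exp_log_rho:
  assumes "c > 0" "T > 0" "Y > 0"
  shows "exp (log_rho K d m c T Y)
    = exp K * c powr (1/2) * T / Y powr (3/2) / exp (c * quad_exponent d m T Y)"
proof -
  have "exp (log_rho K d m c T Y)
      = exp K * exp (ln c / 2) * exp (ln T) / exp (3/2 * ln Y) / exp (c * quad_exponent d m T Y)"
    by (simp only: log_rho_def exp_add exp_diff)
  then show ?thesis
    using assms by (simp add: powr_def)
qed

lemma powr_three_halves_cancel:
  assumes "(c::real) > 0"
  shows "c * c / c powr (3/2) = c powr (1/2)"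
proof -
  have "c powr 1 * c powr 1 / c powr (3/2) = c powr (1 + 1 - 3/2)"
    by (simp only: powr_add powr_diff)
  then show ?thesis using assms by simp
qed

lemma rho_eq_exp_log_rho:
  assumes "delta > 0" "c > 0" "s < t" "x < y"
  shows "rho delta lam c s x t y
     = exp (log_rho (ln ((4*pi) powr (-1/2) * delta)) delta (2 * sqrt lam) c (t - s) (y - x))"
proof -
  define T Y where "T = t - s" and "Y = y - x"
  have "T > 0" "Y > 0" using assms by (auto simp: T_def Y_def)
  have "c * c * (c * Y) powr (-3/2) = c powr (1/2) / Y powr (3/2)"
    using assms \<open>Y > 0\<close> powr_three_halves_cancel[of c]
    by (simp add: powr_mult powr_minus_divide flip: divide_divide_eq_left)
  moreover have "(delta * (c * T) - 2 * sqrt lam * (c * Y))^2 / (4 * (c * Y))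
      = c * quad_exponent delta (2 * sqrt lam) T Y"
    using assms \<open>Y > 0\<close> by (simp add: quad_exponent_def power2_eq_square field_simps)
  ultimately show ?thesis
    using assms \<open>T > 0\<close> \<open>Y > 0\<close>
    by (simp add: rho_def pdens_def exp_log_rho exp_minus field_simps flip: T_def Y_def)
qed

lemma quad_exponent_add_le:
  assumes "Y\<^sub>1 > 0" "Y\<^sub>2 > 0" "h > 0" "k > 0" "1/h + 1/k = 1"
  shows "quad_exponent d m (T\<^sub>1 + T\<^sub>2) (Y\<^sub>1 + Y\<^sub>2)
    \<le> (h * Y\<^sub>1 * quad_exponent d m T\<^sub>1 Y\<^sub>1 + k * Y\<^sub>2 * quad_exponent d m T\<^sub>2 Y\<^sub>2) / (Y\<^sub>1 + Y\<^sub>2)"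
proof -
  have "(d * T\<^sub>1 - m * Y\<^sub>1 + (d * T\<^sub>2 - m * Y\<^sub>2))^2 \<le> h * (d * T\<^sub>1 - m * Y\<^sub>1)^2 + k * (d * T\<^sub>2 - m * Y\<^sub>2)^2"
    using assms(3-5) by (rule square_add_le_weighted)
  then have "(d * T\<^sub>1 - m * Y\<^sub>1 + (d * T\<^sub>2 - m * Y\<^sub>2))^2 / (4 * (Y\<^sub>1 + Y\<^sub>2))
      \<le> (h * (d * T\<^sub>1 - m * Y\<^sub>1)^2 + k * (d * T\<^sub>2 - m * Y\<^sub>2)^2) / (4 * (Y\<^sub>1 + Y\<^sub>2))"
    using assms by (intro divide_right_mono) auto
  then show ?thesis
    using assms by (simp add: quad_exponent_def field_simps)
qed

lemma quad_exponent_subadditive: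
  assumes "Y\<^sub>1 > 0" "Y\<^sub>2 > 0"
  shows "quad_exponent d m (T\<^sub>1 + T\<^sub>2) (Y\<^sub>1 + Y\<^sub>2) \<le> quad_exponent d m T\<^sub>1 Y\<^sub>1 + quad_exponent d m T\<^sub>2 Y\<^sub>2"
proof -
  let ?Y = "Y\<^sub>1 + Y\<^sub>2"
  have "?Y / Y\<^sub>1 * Y\<^sub>1 = ?Y" "?Y / Y\<^sub>2 * Y\<^sub>2 = ?Y" "?Y > 0"
    using assms by simp_all
  moreover have "quad_exponent d m (T\<^sub>1 + T\<^sub>2) ?Y
      \<le> (?Y / Y\<^sub>1 * Y\<^sub>1 * quad_exponent d m T\<^sub>1 Y\<^sub>1 + ?Y / Y\<^sub>2 * Y\<^sub>2 * quad_exponent d m T\<^sub>2 Y\<^sub>2) / ?Y"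
    using assms by (intro quad_exponent_add_le) (auto simp flip: add_divide_distrib)
  ultimately show ?thesis
    by (simp only:) (simp flip: distrib_left)
qed

context
  fixes K d m a b T\<^sub>1 T\<^sub>2 Y\<^sub>1 Y\<^sub>2 :: real
  assumes a_pos: "0 < a" and a_less_b: "a < b"
    and T_pos: "T\<^sub>1 > 0" "T\<^sub>2 > 0" and Y_pos: "Y\<^sub>1 > 0" "Y\<^sub>2 > 0"
begin

lemma log_rho_interpolation:
  "log_rho K d m b T\<^sub>1 Y\<^sub>1 + log_rho K d m a T\<^sub>2 Y\<^sub>2
    = \<theta> * log_rho K d m (b - a) T\<^sub>1 Y\<^sub>1 + (1 - \<theta>) * log_rho K d m a T\<^sub>2 Y\<^sub>2
      + log_rho K d m a (T\<^sub>1 + T\<^sub>2) (Y\<^sub>1 + Y\<^sub>2)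
      + (\<theta>/2 * ln (b / (b - a)) + (1 - \<theta>)/2 * ln (b / a))
      + ((1 - \<theta>) * ln T\<^sub>1 + \<theta> * ln T\<^sub>2 - ln (T\<^sub>1 + T\<^sub>2))
      + 3/2 * ((1 - \<theta>) * ln ((Y\<^sub>1 + Y\<^sub>2) / Y\<^sub>1) + \<theta> * ln ((Y\<^sub>1 + Y\<^sub>2) / Y\<^sub>2))
      + (a * quad_exponent d m (T\<^sub>1 + T\<^sub>2) (Y\<^sub>1 + Y\<^sub>2)
         - (b - \<theta> * (b - a)) * quad_exponent d m T\<^sub>1 Y\<^sub>1 - \<theta> * a * quad_exponent d m T\<^sub>2 Y\<^sub>2)"
  using a_pos a_less_b Y_pos by (simp add: log_rho_def ln_divide_pos field_simps)

lemma conjugate_weights: "1 / (b / a) + 1 / (b / (b - a)) = 1"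
  using a_pos a_less_b by (simp add: field_simps)

lemma log_rho_bound_large_Y2:
  assumes "Y\<^sub>1 + Y\<^sub>2 \<le> max (b / (b - a)) (b / a) * Y\<^sub>2"
  shows "log_rho K d m b T\<^sub>1 Y\<^sub>1 + log_rho K d m a T\<^sub>2 Y\<^sub>2
    \<le> 3/2 * ln (b / (b - a)) + 3/2 * ln (max (b / (b - a)) (b / a))
      + log_rho K d m (b - a) T\<^sub>1 Y\<^sub>1 + log_rho K d m a (T\<^sub>1 + T\<^sub>2) (Y\<^sub>1 + Y\<^sub>2)"
proof -
  let ?Y = "Y\<^sub>1 + Y\<^sub>2"
  have "ln (b / (b - a)) \<ge> 0"
    using a_pos a_less_b by simp
  have "ln T\<^sub>2 \<le> ln (T\<^sub>1 + T\<^sub>2)"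
    using T_pos by simp
  have "ln (?Y / Y\<^sub>2) \<le> ln (max (b / (b - a)) (b / a))"
    using assms Y_pos by (intro ln_mono) (simp_all add: pos_divide_le_eq)
  have "a * quad_exponent d m (T\<^sub>1 + T\<^sub>2) ?Y
      \<le> a * quad_exponent d m T\<^sub>1 Y\<^sub>1 + a * quad_exponent d m T\<^sub>2 Y\<^sub>2"
    using quad_exponent_subadditive[OF Y_pos, of d m T\<^sub>1 T\<^sub>2] a_pos by (simp flip: distrib_left)
  then show ?thesis
    using log_rho_interpolation[of 1] \<open>ln (b / (b - a)) \<ge> 0\<close> \<open>ln T\<^sub>2 \<le> ln (T\<^sub>1 + T\<^sub>2)\<close>
      \<open>ln (?Y / Y\<^sub>2) \<le> ln (max (b / (b - a)) (b / a))\<close>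
    by simp
qed

lemma quad_exponent_interpolation:
  assumes \<theta>_def: "\<theta> = b / (b - a) * Y\<^sub>2 / (Y\<^sub>1 + Y\<^sub>2)"
  shows "a * quad_exponent d m (T\<^sub>1 + T\<^sub>2) (Y\<^sub>1 + Y\<^sub>2)
    \<le> (b - \<theta> * (b - a)) * quad_exponent d m T\<^sub>1 Y\<^sub>1 + \<theta> * a * quad_exponent d m T\<^sub>2 Y\<^sub>2"
proof -
  define Y where "Y = Y\<^sub>1 + Y\<^sub>2"
  have "Y > 0" using Y_pos by (simp add: Y_def)
  have "a * quad_exponent d m (T\<^sub>1 + T\<^sub>2) Y
      \<le> a * ((b / a * Y\<^sub>1 * quad_exponent d m T\<^sub>1 Y\<^sub>1 + b / (b - a) * Y\<^sub>2 * quad_exponent d m T\<^sub>2 Y\<^sub>2) / Y)"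
    unfolding Y_def using a_pos a_less_b Y_pos conjugate_weights
    by (intro mult_left_mono quad_exponent_add_le) auto
  also have "\<dots> = b * Y\<^sub>1 / Y * quad_exponent d m T\<^sub>1 Y\<^sub>1
      + a * b * Y\<^sub>2 / ((b - a) * Y) * quad_exponent d m T\<^sub>2 Y\<^sub>2"
    using a_pos by (simp add: add_divide_distrib distrib_left)
  also have "b * Y\<^sub>1 / Y = b - \<theta> * (b - a)"
  proof -
    have "\<theta> * (b - a) = b * Y\<^sub>2 / Y"
      using a_less_b by (simp add: \<theta>_def Y_def)
    with \<open>Y > 0\<close> show ?thesis
      by (simp add: field_simps) (simp add: Y_def algebra_simps)
  qed
  also have "a * b * Y\<^sub>2 / ((b - a) * Y) = \<theta> * a"
    by (simp add: \<theta>_def Y_def)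
  finally show ?thesis
    unfolding Y_def .
qed

context
  fixes \<theta> :: real
  assumes small_Y2: "max (b / (b - a)) (b / a) * Y\<^sub>2 < Y\<^sub>1 + Y\<^sub>2"
    and \<theta>_def: "\<theta> = b / (b - a) * Y\<^sub>2 / (Y\<^sub>1 + Y\<^sub>2)"
begin

lemma small_Y2_weight: "0 < \<theta>" "\<theta> < 1" "Y\<^sub>1 + Y\<^sub>2 < b / (b - a) * Y\<^sub>1"
proof -
  let ?k = "b / (b - a)" and ?h = "b / a"
  have "?k * Y\<^sub>2 \<le> max ?k ?h * Y\<^sub>2" "?h * Y\<^sub>2 \<le> max ?k ?h * Y\<^sub>2"
    using Y_pos by (intro mult_right_mono; simp)+
  then have "?k * Y\<^sub>2 < Y\<^sub>1 + Y\<^sub>2" "?h * Y\<^sub>2 < Y\<^sub>1 + Y\<^sub>2"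
    using small_Y2 by linarith+
  then show "\<theta> < 1" "Y\<^sub>1 + Y\<^sub>2 < ?k * Y\<^sub>1"
    using Y_pos a_pos a_less_b by (simp_all only: \<theta>_def divide_less_eq_1_pos add_pos_pos)
      (simp add: field_simps)
  show "0 < \<theta>"
    using Y_pos a_pos a_less_b by (simp add: \<theta>_def)
qed

lemma space_part_small_Y2:
  "(1 - \<theta>) * ln ((Y\<^sub>1 + Y\<^sub>2) / Y\<^sub>1) + \<theta> * ln ((Y\<^sub>1 + Y\<^sub>2) / Y\<^sub>2)
    \<le> ln (b / (b - a)) + 2/3 * ln (max (b / (b - a)) (b / a))"
proof -
  let ?Y = "Y\<^sub>1 + Y\<^sub>2" and ?k = "b / (b - a)" and ?M = "max (b / (b - a)) (b / a)"
  have "ln (?Y / Y\<^sub>1) \<le> ln ?k"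
    using small_Y2_weight(3) Y_pos by (intro ln_mono) (simp_all add: pos_divide_le_eq)
  then have "(1 - \<theta>) * ln (?Y / Y\<^sub>1) \<le> (1 - \<theta>) * ln ?k"
    using small_Y2_weight(2) by (intro mult_left_mono) auto
  moreover have "ln (?Y / Y\<^sub>2) = ln ?k - ln \<theta>"
    using Y_pos a_pos a_less_b by (simp add: \<theta>_def ln_div ln_mult)
  then have "\<theta> * ln (?Y / Y\<^sub>2) = \<theta> * ln ?k - \<theta> * ln \<theta>"
    by (simp add: right_diff_distrib)
  moreover have "2 \<le> ?M"
    using max_conjugate_ge_two conjugate_weights a_pos a_less_b by (simp add: max.commute)
  then have "ln 2 \<le> ln ?M"
    by (intro ln_mono) auto
  then have "- (\<theta> * ln \<theta>) \<le> 2/3 * ln ?M"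
    using neg_mult_ln_le_two_thirds_ln_2[OF small_Y2_weight(1)] by linarith
  ultimately show ?thesis
    by (simp add: algebra_simps)
qed

lemma log_rho_bound_small_Y2:
  "log_rho K d m b T\<^sub>1 Y\<^sub>1 + log_rho K d m a T\<^sub>2 Y\<^sub>2
    \<le> 3/2 * ln (b / (b - a)) + 3/2 * ln (max (b / (b - a)) (b / a))
      + max (log_rho K d m (b - a) T\<^sub>1 Y\<^sub>1) (log_rho K d m a T\<^sub>2 Y\<^sub>2)
      + log_rho K d m a (T\<^sub>1 + T\<^sub>2) (Y\<^sub>1 + Y\<^sub>2)"
proof -
  let ?k = "b / (b - a)" and ?h = "b / a"
  let ?M = "max ?k ?h"
  note \<theta> = small_Y2_weight(1,2)
  have "?k > 0" "?h > 0"
    using a_pos a_less_b by simp_all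
  then have "ln ?k \<le> ln ?M" "ln ?h \<le> ln ?M"
    by simp_all
  then have c_part: "\<theta>/2 * ln ?k + (1 - \<theta>)/2 * ln ?h \<le> 1/2 * ln ?M"
    using convex_bound_le[of "ln ?k" "ln ?M" "ln ?h" \<theta> "1 - \<theta>"] \<theta> by simp
  have T_part: "(1 - \<theta>) * ln T\<^sub>1 + \<theta> * ln T\<^sub>2 - ln (T\<^sub>1 + T\<^sub>2) \<le> 0"
    using convex_bound_le[of "ln T\<^sub>1" "ln (T\<^sub>1 + T\<^sub>2)" "ln T\<^sub>2" "1 - \<theta>" \<theta>] T_pos \<theta> by simp
  have "3/2 * ((1 - \<theta>) * ln ((Y\<^sub>1 + Y\<^sub>2) / Y\<^sub>1) + \<theta> * ln ((Y\<^sub>1 + Y\<^sub>2) / Y\<^sub>2))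
      \<le> 3/2 * (ln ?k + 2/3 * ln ?M)"
    using space_part_small_Y2 by (rule mult_left_mono) simp
  also have "\<dots> = 3/2 * ln ?k + ln ?M"
    by (simp add: algebra_simps)
  moreover have "\<theta> * log_rho K d m (b - a) T\<^sub>1 Y\<^sub>1 + (1 - \<theta>) * log_rho K d m a T\<^sub>2 Y\<^sub>2
      \<le> max (log_rho K d m (b - a) T\<^sub>1 Y\<^sub>1) (log_rho K d m a T\<^sub>2 Y\<^sub>2)"
    using \<theta> by (intro convex_bound_le) auto
  ultimately show ?thesis
    using log_rho_interpolation[of \<theta>] c_part T_part quad_exponent_interpolation[OF \<theta>_def]
    by linarith
qed

end

lemma log_rho_bound:
  "log_rho K d m b T\<^sub>1 Y\<^sub>1 + log_rho K d m a T\<^sub>2 Y\<^sub>2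
    \<le> 3/2 * ln (b / (b - a)) + 3/2 * ln (max (b / (b - a)) (b / a))
      + max (log_rho K d m (b - a) T\<^sub>1 Y\<^sub>1) (log_rho K d m a T\<^sub>2 Y\<^sub>2)
      + log_rho K d m a (T\<^sub>1 + T\<^sub>2) (Y\<^sub>1 + Y\<^sub>2)"
proof (cases "Y\<^sub>1 + Y\<^sub>2 \<le> max (b / (b - a)) (b / a) * Y\<^sub>2")
  case True
  then show ?thesis
    using log_rho_bound_large_Y2
      max.cobounded1[of "log_rho K d m (b - a) T\<^sub>1 Y\<^sub>1" "log_rho K d m a T\<^sub>2 Y\<^sub>2"]
    by linarith
next
  case False
  then show ?thesis
    by (intro log_rho_bound_small_Y2[OF _ refl]) simp
qed

end

lemma ln_max_le_lfun:
  fixes a b :: real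
  assumes "0 < a" "a < b"
  shows "ln (max (b / (b - a)) (b / a)) \<le> lfun (a / (b - a))"
proof -
  have "1 + a / (b - a) = b / (b - a)" "1 + 1 / (a / (b - a)) = b / a"
    using assms by (simp_all add: field_simps)
  then have "1 + max (a / (b - a)) (1 / (a / (b - a))) = max (b / (b - a)) (b / a)"
    by (simp only: max_add_distrib_right)
  with lfun_ge_ln[of "a / (b - a)"] assms show ?thesis
    by simp
qed

theorem theorem2p2:
  fixes lam delta a b s u t x z y :: real
  assumes "lam \<ge> 0" and "delta > 0" and "0 < a" and "a < b"
    and "s < u" and "u < t" and "x < z" and "z < y"
  shows "rho delta lam b s x u z * rho delta lam a u z t y
    \<le> Dconst a b * max (rho delta lam (b - a) s x u z) (rho delta lam a u z t y)
        * rho delta lam a s x t y"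
proof -
  define K where "K = ln ((4*pi) powr (-1/2) * delta)"
  define m where "m = 2 * sqrt lam"
  have rho: "rho delta lam c s' x' t' y' = exp (log_rho K delta m c (t' - s') (y' - x'))"
    if "c > 0" "s' < t'" "x' < y'" for c s' x' t' y'
    using rho_eq_exp_log_rho[OF \<open>delta > 0\<close> that] by (simp add: K_def m_def)
  let ?L\<^sub>1 = "log_rho K delta m b (u - s) (z - x)" and ?L\<^sub>2 = "log_rho K delta m a (t - u) (y - z)"
    and ?P = "log_rho K delta m (b - a) (u - s) (z - x)" and ?R = "log_rho K delta m a (t - s) (y - x)"
    and ?C = "3/2 * ln (b / (b - a)) + 3/2 * lfun (a / (b - a))"
  have "?L\<^sub>1 + ?L\<^sub>2 \<le> ?C + max ?P ?L\<^sub>2 + ?R"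
    using log_rho_bound[of a b "u - s" "t - u" "z - x" "y - z" K delta m] ln_max_le_lfun[of a b] assms
    by simp
  then have "exp ?L\<^sub>1 * exp ?L\<^sub>2 \<le> exp ?C * exp (max ?P ?L\<^sub>2) * exp ?R"
    by (simp flip: exp_add)
  moreover have "exp (max ?P ?L\<^sub>2) = max (exp ?P) (exp ?L\<^sub>2)"
    by (simp add: max_def)
  moreover have "Dconst a b = exp ?C"
    using assms by (simp add: Dconst_def powr_def exp_add)
  ultimately show ?thesis
    using assms by (simp add: rho)
qed

end
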